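(* Let $\mathfrak g$ be a $3$-Lie algebra over a field $\mathbb k$ and $(X,\Delta,T)$ its associated TSD object. Define $\Lambda^2(\phi)((a,x)\otimes(b,y)\otimes(c,z))=(0,\phi(x,y,z))$ for $3$-Lie $2$-cochains $\phi$. Then $\Lambda^2$ maps $3$-Lie $2$-cocycles to TSD $2$-cocycles and $3$-Lie $2$-coboundaries to TSD $2$-coboundaries, hence induces a homomorphism $H^2_{3\rm Lie}(\mathfrak g;\mathfrak g)\to H^2_{\rm TSD}(X;X)$.
   Context: A $3$-Lie algebra (Filippov) is a vector space $\mathfrak g$ with an alternating trilinear bracket $[\cdot,\cdot,\cdot]$ satisfying $[[x,y,z],w,u]=[[x,w,u],y,z]+[x,[y,w,u],z]+[x,y,[z,w,u]]$. Associated TSD object: $X=\mathbb k\oplus\mathfrak g$, $\Delta(a,x)=(a,x)\otimes(1,0)+(1,0)\otimes(0,x)$, $\Delta_3=(\Delta\otimes\mathbb 1)\Delta$ (Sweedler $w^{(1)}\otimes w^{(2)}\otimes w^{(3)}$), $T((a,x)\otimes(b,y)\otimes(c,z))=(abc,\ bcx+[x,y,z])$. $3$-Lie cohomology: $2$-cochains are alternating trilinear $\phi\colon\mathfrak g^3\to\mathfrak g$; $\delta^2\phi(x,y,z,w,u)=[\phi(x,y,z),w,u]+\phi([x,y,z],w,u)-[\phi(x,w,u),y,z]-[x,\phi(y,w,u),z]-[x,y,\phi(z,w,u)]-\phi([x,w,u],y,z)-\phi(x,[y,w,u],z)-\phi(x,y,[z,w,u])$; for linear $f\colon\mathfrak g\to\mathfrak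 g$, $\delta^1f(x,y,z)=f([x,y,z])-[f(x),y,z]-[x,f(y),z]-[x,y,f(z)]$; $H^2_{3\rm Lie}=\ker\delta^2/\operatorname{im}\delta^1$. TSD cohomology: with $\sigma$ sending $u_1\otimes\cdots\otimes u_9$ to $u_1\otimes u_4\otimes u_7\otimes u_2\otimes u_5\otimes u_8\otimes u_3\otimes u_6\otimes u_9$: $C^1_{\rm TSD}$ = linear $f$ with $\Delta_3 f=(f\otimes\mathbb 1\otimes\mathbb 1+\mathbb 1\otimes f\otimes\mathbb 1+\mathbb 1\otimes\mathbb 1\otimes f)\Delta_3$; $C^2_{\rm TSD}$ = linear $\psi$ with $\Delta_3\psi=(\psi\otimes T\otimes T+T\otimes\psi\otimes T+T\otimes T\otimes\psi)\sigma\Delta_3^{\otimes3}$; $\delta^1 f(x\otimes y\otimes z)=f(T(x\otimes y\otimes z))-T(f(x)\otimes y\otimes z)-T(x\otimes f(y)\otimes z)-T(x\otimes y\otimes f(z))$; $\delta^2\psi(x\otimes y\otimes z\otimes w\otimes u)=T(\psi(x\otimes y\otimes z)\otimes w\otimes u)+\psi(T(x\otimes y\otimes z)\otimes w\otimes u)-\psi(A_1\otimes A_2\otimes A_3)-T(\Psi_1\otimes A_2\otimes A_3)-T(A_1\otimes\Psi_2\otimes A_3)-T(A_1\otimes A_2\otimes\Psi_3)$, $A_i=T(x_i\otimes w^{(i)}\otimes u^{(i)})$, $(x_1,x_2,x_3)=(x,y,z)$, $\Psi_i$ likewise with $\psi$; $H^2_{\rm TSD}=(C^2\cap\ker\delta^2)/\delta^1(C^1)$.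 *)

theory Defs
  imports Main HOL.Vector_Spaces "HOL-Library.Product_Plus"
begin

definition is_linear :: "('k \<Rightarrow> 'a::ab_group_add \<Rightarrow> 'a) \<Rightarrow> ('k \<Rightarrow> 'b::ab_group_add \<Rightarrow> 'b) \<Rightarrow> ('a \<Rightarrow> 'b) \<Rightarrow> bool" where
  "is_linear s1 s2 f \<longleftrightarrow> (\<forall>x y. f (x + y) = f x + f y) \<and> (\<forall>c x. f (s1 c x) = s2 c (f x))"

definition trilin :: "('k \<Rightarrow> 'a::ab_group_add \<Rightarrow> 'a) \<Rightarrow> ('k \<Rightarrow> 'b::ab_group_add \<Rightarrow> 'b) \<Rightarrow> ('a \<Rightarrow> 'a \<Rightarrow> 'a \<Rightarrow> 'b) \<Rightarrow> bool" where
  "trilin s1 s2 F \<longleftrightarrow> (\<forall>y z. is_linear s1 s2 (\<lambda>x. F x y z)) \<and> (\<forall>x z. is_linear s1 s2 (\<lambda>y. F x y z))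
      \<and> (\<forall>x y. is_linear s1 s2 (\<lambda>z. F x y z))"

definition alternating3 :: "('a \<Rightarrow> 'a \<Rightarrow> 'a \<Rightarrow> 'b::zero) \<Rightarrow> bool" where
  "alternating3 F \<longleftrightarrow> (\<forall>x z. F x x z = 0) \<and> (\<forall>x y. F x y y = 0) \<and> (\<forall>x y. F x y x = 0)"

definition three_Lie :: "('k::field \<Rightarrow> 'g::ab_group_add \<Rightarrow> 'g) \<Rightarrow> ('g \<Rightarrow> 'g \<Rightarrow> 'g \<Rightarrow> 'g) \<Rightarrow> bool" where
  "three_Lie s br \<longleftrightarrow> vector_space s \<and> trilin s s br \<and> alternating3 br \<and>
     (\<forall>x y z w u. br (br x y z) w u = br (br x w u) y z + br x (br y w u) z + br x y (br z w u))"

definition Lie_cochain2 :: "('k::field \<Rightarrow> 'g::ab_group_add \<Rightarrow> 'g) \<Rightarrow> ('g \<Rightarrow> 'g \<Rightarrow> 'g \<Rightarrow> 'g) \<Rightarrow> bool" where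
  "Lie_cochain2 s \<phi> \<longleftrightarrow> trilin s s \<phi> \<and> alternating3 \<phi>"

definition Lie_delta2 :: "('g::ab_group_add \<Rightarrow> 'g \<Rightarrow> 'g \<Rightarrow> 'g) \<Rightarrow> ('g \<Rightarrow> 'g \<Rightarrow> 'g \<Rightarrow> 'g) \<Rightarrow> 'g \<Rightarrow> 'g \<Rightarrow> 'g \<Rightarrow> 'g \<Rightarrow> 'g \<Rightarrow> 'g" where
  "Lie_delta2 br \<phi> x y z w u =
     br (\<phi> x y z) w u + \<phi> (br x y z) w u - br (\<phi> x w u) y z - br x (\<phi> y w u) z - br x y (\<phi> z w u)
     - \<phi> (br x w u) y z - \<phi> x (br y w u) z - \<phi> x y (br z w u)"

definition Lie_delta1 :: "('g::ab_group_add \<Rightarrow> 'g \<Rightarrow> 'g \<Rightarrow> 'g) \<Rightarrow> ('g \<Rightarrow> 'g) \<Rightarrow> 'g \<Rightarrow> 'g \<Rightarrow> 'g \<Rightarrow> 'g" where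
  "Lie_delta1 br f x y z = f (br x y z) - br (f x) y z - br x (f y) z - br x y (f z)"

definition Lie_cocycle2 :: "('k::field \<Rightarrow> 'g::ab_group_add \<Rightarrow> 'g) \<Rightarrow> ('g \<Rightarrow> 'g \<Rightarrow> 'g \<Rightarrow> 'g) \<Rightarrow> ('g \<Rightarrow> 'g \<Rightarrow> 'g \<Rightarrow> 'g) \<Rightarrow> bool" where
  "Lie_cocycle2 s br \<phi> \<longleftrightarrow> Lie_cochain2 s \<phi> \<and> (\<forall>x y z w u. Lie_delta2 br \<phi> x y z w u = 0)"

definition Lie_coboundary2 :: "('k::field \<Rightarrow> 'g::ab_group_add \<Rightarrow> 'g) \<Rightarrow> ('g \<Rightarrow> 'g \<Rightarrow> 'g \<Rightarrow> 'g) \<Rightarrow> ('g \<Rightarrow> 'g \<Rightarrow> 'g \<Rightarrow> 'g) \<Rightarrow> bool" where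
  "Lie_coboundary2 s br \<phi> \<longleftrightarrow> (\<exists>f. is_linear s s f \<and> \<phi> = Lie_delta1 br f)"

definition scaleX :: "('k::field \<Rightarrow> 'g::ab_group_add \<Rightarrow> 'g) \<Rightarrow> 'k \<Rightarrow> 'k \<times> 'g \<Rightarrow> 'k \<times> 'g" where
  "scaleX s c p = (c * fst p, s c (snd p))"

text \<open>Tensors in X (x) X (x) X are represented by finite lists of pure tensors
  (the list [(a1,b1,c1),...] stands for the sum of the a_i (x) b_i (x) c_i).
  Two such representatives denote the same tensor iff all product functionals
  l1 (x) l2 (x) l3 (with l_i linear functionals on X) agree on them; over a field
  this is exactly equality in the tensor product.\<close>

definition teq3 :: "('k::field \<Rightarrow> 'g::ab_group_add \<Rightarrow> 'g) \<Rightarrow> (('k \<times> 'g) \<times> ('k \<times> 'g) \<times> ('k \<times> 'g)) list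
     \<Rightarrow> (('k \<times> 'g) \<times> ('k \<times> 'g) \<times> ('k \<times> 'g)) list \<Rightarrow> bool" where
  "teq3 s L1 L2 \<longleftrightarrow> (\<forall>l1 l2 l3. is_linear (scaleX s) (*) l1 \<and> is_linear (scaleX s) (*) l2 \<and> is_linear (scaleX s) (*) l3 \<longrightarrow>
      sum_list (map (\<lambda>(p,q,r). l1 p * l2 q * l3 r) L1) = sum_list (map (\<lambda>(p,q,r). l1 p * l2 q * l3 r) L2))"

definition Delta :: "'k::field \<times> 'g::ab_group_add \<Rightarrow> (('k \<times> 'g) \<times> ('k \<times> 'g)) list" where
  "Delta w = [(w, (1, 0)), ((1, 0), (0, snd w))]"

text \<open>Delta_3 = (Delta (x) 1) Delta\<close>
definition Delta3 :: "'k::field \<times> 'g::ab_group_add \<Rightarrow> (('k \<times> 'g) \<times> ('k \<times> 'g) \<times> ('k \<times> 'g)) list" where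
  "Delta3 w = concat (map (\<lambda>(u, v). map (\<lambda>(p, q). (p, q, v)) (Delta u)) (Delta w))"

definition TT :: "('k::field \<Rightarrow> 'g::ab_group_add \<Rightarrow> 'g) \<Rightarrow> ('g \<Rightarrow> 'g \<Rightarrow> 'g \<Rightarrow> 'g)
     \<Rightarrow> 'k \<times> 'g \<Rightarrow> 'k \<times> 'g \<Rightarrow> 'k \<times> 'g \<Rightarrow> 'k \<times> 'g" where
  "TT s br p q r = (fst p * fst q * fst r, s (fst q * fst r) (snd p) + br (snd p) (snd q) (snd r))"

text \<open>Delta_3^{(x)3}(x (x) y (x) z), a 9-fold tensor grouped as three triples\<close>
definition Delta3_cube :: "'k::field \<times> 'g::ab_group_add \<Rightarrow> 'k \<times> 'g \<Rightarrow> 'k \<times> 'g \<Rightarrow>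
    ((('k \<times> 'g) \<times> ('k \<times> 'g) \<times> ('k \<times> 'g)) \<times> (('k \<times> 'g) \<times> ('k \<times> 'g) \<times> ('k \<times> 'g)) \<times> (('k \<times> 'g) \<times> ('k \<times> 'g) \<times> ('k \<times> 'g))) list" where
  "Delta3_cube x y z = [(tx, ty, tz). tx \<leftarrow> Delta3 x, ty \<leftarrow> Delta3 y, tz \<leftarrow> Delta3 z]"

fun sigma9 :: "('a \<times> 'a \<times> 'a) \<times> ('a \<times> 'a \<times> 'a) \<times> ('a \<times> 'a \<times> 'a) \<Rightarrow> ('a \<times> 'a \<times> 'a) \<times> ('a \<times> 'a \<times> 'a) \<times> ('a \<times> 'a \<times> 'a)" where
  "sigma9 ((u1, u2, u3), (u4, u5, u6), (u7, u8, u9)) = ((u1, u4, u7), (u2, u5, u8), (u3, u6, u9))"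

definition TSD_C1 :: "('k::field \<Rightarrow> 'g::ab_group_add \<Rightarrow> 'g) \<Rightarrow> ('k \<times> 'g \<Rightarrow> 'k \<times> 'g) \<Rightarrow> bool" where
  "TSD_C1 s f \<longleftrightarrow> is_linear (scaleX s) (scaleX s) f \<and>
     (\<forall>w. teq3 s (Delta3 (f w))
          (map (\<lambda>(p, q, r). (f p, q, r)) (Delta3 w) @ map (\<lambda>(p, q, r). (p, f q, r)) (Delta3 w)
           @ map (\<lambda>(p, q, r). (p, q, f r)) (Delta3 w)))"

definition TSD_C2 :: "('k::field \<Rightarrow> 'g::ab_group_add \<Rightarrow> 'g) \<Rightarrow> ('g \<Rightarrow> 'g \<Rightarrow> 'g \<Rightarrow> 'g)
     \<Rightarrow> ('k \<times> 'g \<Rightarrow> 'k \<times> 'g \<Rightarrow> 'k \<times> 'g \<Rightarrow> 'k \<times> 'g) \<Rightarrow> bool" where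
  "TSD_C2 s br \<psi> \<longleftrightarrow> trilin (scaleX s) (scaleX s) \<psi> \<and>
     (\<forall>x y z. teq3 s (Delta3 (\<psi> x y z))
        (let S = map sigma9 (Delta3_cube x y z);
             P = (\<lambda>(p, q, r). \<psi> p q r); Tm = (\<lambda>(p, q, r). TT s br p q r)
         in map (\<lambda>(a, b, c). (P a, Tm b, Tm c)) S @ map (\<lambda>(a, b, c). (Tm a, P b, Tm c)) S
            @ map (\<lambda>(a, b, c). (Tm a, Tm b, P c)) S))"

definition TSD_delta1 :: "('k::field \<Rightarrow> 'g::ab_group_add \<Rightarrow> 'g) \<Rightarrow> ('g \<Rightarrow> 'g \<Rightarrow> 'g \<Rightarrow> 'g)
     \<Rightarrow> ('k \<times> 'g \<Rightarrow> 'k \<times> 'g) \<Rightarrow> 'k \<times> 'g \<Rightarrow> 'k \<times> 'g \<Rightarrow> 'k \<times> 'g \<Rightarrow> 'k \<times> 'g" where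
  "TSD_delta1 s br f x y z = f (TT s br x y z) - TT s br (f x) y z - TT s br x (f y) z - TT s br x y (f z)"

text \<open>delta^2 on pure tensors x (x) y (x) z (x) w (x) u; the Sweedler sums over
  Delta_3 w and Delta_3 u are expanded as sums over the list representatives.\<close>
definition TSD_delta2 :: "('k::field \<Rightarrow> 'g::ab_group_add \<Rightarrow> 'g) \<Rightarrow> ('g \<Rightarrow> 'g \<Rightarrow> 'g \<Rightarrow> 'g)
     \<Rightarrow> ('k \<times> 'g \<Rightarrow> 'k \<times> 'g \<Rightarrow> 'k \<times> 'g \<Rightarrow> 'k \<times> 'g)
     \<Rightarrow> 'k \<times> 'g \<Rightarrow> 'k \<times> 'g \<Rightarrow> 'k \<times> 'g \<Rightarrow> 'k \<times> 'g \<Rightarrow> 'k \<times> 'g \<Rightarrow> 'k \<times> 'g" where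
  "TSD_delta2 s br \<psi> x y z w u =
     (let T = TT s br;
          SW = [(tw, tu). tw \<leftarrow> Delta3 w, tu \<leftarrow> Delta3 u]
      in T (\<psi> x y z) w u + \<psi> (T x y z) w u
       - sum_list (map (\<lambda>((w1, w2, w3), (u1, u2, u3)). \<psi> (T x w1 u1) (T y w2 u2) (T z w3 u3)) SW)
       - sum_list (map (\<lambda>((w1, w2, w3), (u1, u2, u3)). T (\<psi> x w1 u1) (T y w2 u2) (T z w3 u3)) SW)
       - sum_list (map (\<lambda>((w1, w2, w3), (u1, u2, u3)). T (T x w1 u1) (\<psi> y w2 u2) (T z w3 u3)) SW)
       - sum_list (map (\<lambda>((w1, w2, w3), (u1, u2, u3)). T (T x w1 u1) (T y w2 u2) (\<psi> z w3 u3)) SW))"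

definition TSD_cocycle2 :: "('k::field \<Rightarrow> 'g::ab_group_add \<Rightarrow> 'g) \<Rightarrow> ('g \<Rightarrow> 'g \<Rightarrow> 'g \<Rightarrow> 'g)
     \<Rightarrow> ('k \<times> 'g \<Rightarrow> 'k \<times> 'g \<Rightarrow> 'k \<times> 'g \<Rightarrow> 'k \<times> 'g) \<Rightarrow> bool" where
  "TSD_cocycle2 s br \<psi> \<longleftrightarrow> TSD_C2 s br \<psi> \<and> (\<forall>x y z w u. TSD_delta2 s br \<psi> x y z w u = 0)"

definition TSD_coboundary2 :: "('k::field \<Rightarrow> 'g::ab_group_add \<Rightarrow> 'g) \<Rightarrow> ('g \<Rightarrow> 'g \<Rightarrow> 'g \<Rightarrow> 'g)
     \<Rightarrow> ('k \<times> 'g \<Rightarrow> 'k \<times> 'g \<Rightarrow> 'k \<times> 'g \<Rightarrow> 'k \<times> 'g) \<Rightarrow> bool" where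
  "TSD_coboundary2 s br \<psi> \<longleftrightarrow> (\<exists>f. TSD_C1 s f \<and> \<psi> = TSD_delta1 s br f)"

definition Lambda2 :: "('g \<Rightarrow> 'g \<Rightarrow> 'g \<Rightarrow> 'g) \<Rightarrow> 'k::zero \<times> 'g \<Rightarrow> 'k \<times> 'g \<Rightarrow> 'k \<times> 'g \<Rightarrow> 'k \<times> 'g" where
  "Lambda2 \<phi> p q r = (0, \<phi> (snd p) (snd q) (snd r))"

end

theory Submission imports Defs begin

text \<open>Both \<open>\<Lambda>\<^sup>2 \<phi>\<close> and the lift \<open>p \<mapsto> (0, f (snd p))\<close> of a linear map \<open>f\<close> only
  read the g-components of their arguments and take values in \<open>0 \<times> g\<close>. In \<open>\<Delta>\<^sub>3 (a, x)\<close>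
  the vector \<open>x\<close> occurs in only one tensor factor of each term, so in the comultiplicativity
  conditions every term except the expected three has a factor \<open>0\<close> and is killed by every
  product of linear functionals. On pure tensors the TSD differentials of these maps are
  the lifts of the 3-Lie differentials, so cocycles and coboundaries are preserved.\<close>

lemma is_linear_zero: "is_linear s1 s2 f \<Longrightarrow> f 0 = 0"
  unfolding is_linear_def by (metis add_cancel_right_right)

lemma is_linear_zero_pair: "is_linear s1 s2 f \<Longrightarrow> f (0, 0) = 0"
  using is_linear_zero[of s1 s2 f] by (simp add: zero_prod_def)

lemma trilin_simps:
  assumes "trilin s1 s2 F"
  shows "F 0 y z = 0" "F x 0 z = 0" "F x y 0 = 0"
    "F (x + x') y z = F x y z + F x' y z" "F x (y + y') z = F x y z + F x y' z"
    "F x y (z + z') = F x y z + F x y z'"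
    "F (s1 c x) y z = s2 c (F x y z)" "F x (s1 c y) z = s2 c (F x y z)"
    "F x y (s1 c z) = s2 c (F x y z)"
proof -
  have lin: "is_linear s1 s2 (\<lambda>x. F x y z)" "is_linear s1 s2 (\<lambda>y. F x y z)"
    "is_linear s1 s2 (\<lambda>z. F x y z)" for x y z
    using assms unfolding trilin_def by auto
  show "F 0 y z = 0" "F x 0 z = 0" "F x y 0 = 0"
    using is_linear_zero[OF lin(1)] is_linear_zero[OF lin(2)] is_linear_zero[OF lin(3)] by simp_all
qed (use assms in \<open>auto simp: trilin_def is_linear_def\<close>)

lemma Delta3_pair:
  "Delta3 (a, x) =
     [((a, x), (1, 0), (1, 0)), ((1, 0), (0, x), (1, 0)), ((1, 0), (1, 0), (0, x)), ((1, 0), (0, 0), (0, x))]"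
  by (simp add: Delta3_def Delta_def)

lemma TSD_C1_lift:
  assumes "is_linear s s f"
  shows "TSD_C1 s (\<lambda>p. (0, f (snd p)))"
  unfolding TSD_C1_def
proof (intro conjI allI)
  show "is_linear (scaleX s) (scaleX s) (\<lambda>p. (0, f (snd p)))"
    using assms by (simp add: is_linear_def scaleX_def)
next
  fix w :: "'a \<times> 'b"
  have "f 0 = 0"
    using assms by (rule is_linear_zero)
  then show "teq3 s (Delta3 (0, f (snd w)))
      (map (\<lambda>(p, q, r). ((0, f (snd p)), q, r)) (Delta3 w) @ map (\<lambda>(p, q, r). (p, (0, f (snd q)), r)) (Delta3 w)
       @ map (\<lambda>(p, q, r). (p, q, (0, f (snd r)))) (Delta3 w))"
    by (cases w) (auto simp: teq3_def Delta3_pair is_linear_zero_pair)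
qed

context
  fixes s :: "'k::field \<Rightarrow> 'g::ab_group_add \<Rightarrow> 'g" and br :: "'g \<Rightarrow> 'g \<Rightarrow> 'g \<Rightarrow> 'g"
  assumes scale_vector_space: "vector_space s" and br_trilin: "trilin s s br"
begin

interpretation vector_space s by (rule scale_vector_space)

lemmas br_simps[simp] = trilin_simps[OF br_trilin]

lemma TSD_C2_Lambda2:
  assumes "trilin s s \<phi>"
  shows "TSD_C2 s br (Lambda2 \<phi> :: 'k \<times> 'g \<Rightarrow> _)"
  unfolding TSD_C2_def
proof (intro conjI allI)
  show "trilin (scaleX s) (scaleX s) (Lambda2 \<phi> :: 'k \<times> 'g \<Rightarrow> _)"
    using trilin_simps[OF assms] by (simp add: trilin_def is_linear_def Lambda2_def scaleX_def)
next
  fix x y z :: "'k \<times> 'g"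
  show "teq3 s (Delta3 (Lambda2 \<phi> x y z))
      (let S = map sigma9 (Delta3_cube x y z);
           P = (\<lambda>(p, q, r). Lambda2 \<phi> p q r); Tm = (\<lambda>(p, q, r). TT s br p q r)
       in map (\<lambda>(a, b, c). (P a, Tm b, Tm c)) S @ map (\<lambda>(a, b, c). (Tm a, P b, Tm c)) S
          @ map (\<lambda>(a, b, c). (Tm a, Tm b, P c)) S)"
    using trilin_simps[OF assms]
    by (cases x, cases y, cases z)
      (auto simp: teq3_def is_linear_zero_pair Delta3_pair Delta3_cube_def Lambda2_def TT_def)
qed

lemma TSD_delta2_Lambda2:
  assumes "trilin s s \<phi>"
  shows "TSD_delta2 s br (Lambda2 \<phi>) x y z w u
    = (0, Lie_delta2 br \<phi> (snd x) (snd y) (snd z) (snd w) (snd u))"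
  using trilin_simps[OF assms]
  by (cases x, cases y, cases z, cases w, cases u)
    (simp add: TSD_delta2_def Delta3_pair Lambda2_def TT_def Lie_delta2_def;
     simp add: zero_prod_def algebra_simps)

lemma TSD_delta1_lift:
  assumes "is_linear s s f"
  shows "TSD_delta1 s br (\<lambda>p. (0, f (snd p))) = Lambda2 (Lie_delta1 br f)"
proof (intro ext)
  fix x y z :: "'k \<times> 'g"
  show "TSD_delta1 s br (\<lambda>p. (0, f (snd p))) x y z = Lambda2 (Lie_delta1 br f) x y z"
    using assms by (cases x, cases y, cases z)
      (simp add: TSD_delta1_def Lambda2_def TT_def Lie_delta1_def is_linear_def algebra_simps)
qed

end

theorem mainTheorem9:
  fixes s :: "'k::field \<Rightarrow> 'g::ab_group_add \<Rightarrow> 'g"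
    and br :: "'g \<Rightarrow> 'g \<Rightarrow> 'g \<Rightarrow> 'g"
  assumes "three_Lie s br"
  shows "(\<forall>\<phi>. Lie_cocycle2 s br \<phi> \<longrightarrow> TSD_cocycle2 s br (Lambda2 \<phi> :: 'k \<times> 'g \<Rightarrow> _))
       \<and> (\<forall>\<phi>. Lie_coboundary2 s br \<phi> \<longrightarrow> TSD_coboundary2 s br (Lambda2 \<phi> :: 'k \<times> 'g \<Rightarrow> _))
       \<and> (\<forall>\<phi> \<phi>'. (Lambda2 (\<lambda>x y z. \<phi> x y z + \<phi>' x y z) :: 'k \<times> 'g \<Rightarrow> _)
                  = (\<lambda>p q r. Lambda2 \<phi> p q r + Lambda2 \<phi>' p q r))
       \<and> (\<forall>(c::'k) \<phi>. (Lambda2 (\<lambda>x y z. s c (\<phi> x y z)) :: 'k \<times> 'g \<Rightarrow> _)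
                  = (\<lambda>p q r. scaleX s c (Lambda2 \<phi> p q r)))"
proof -
  have vs: "vector_space s" and br: "trilin s s br"
    using assms by (simp_all add: three_Lie_def)
  have cocycle: "TSD_cocycle2 s br (Lambda2 \<phi> :: 'k \<times> 'g \<Rightarrow> _)" if "Lie_cocycle2 s br \<phi>" for \<phi>
    using that TSD_C2_Lambda2[OF vs br] TSD_delta2_Lambda2[OF vs br]
    by (simp add: Lie_cocycle2_def Lie_cochain2_def TSD_cocycle2_def zero_prod_def)
  have coboundary: "TSD_coboundary2 s br (Lambda2 \<phi> :: 'k \<times> 'g \<Rightarrow> _)" if "Lie_coboundary2 s br \<phi>" for \<phi>
    using that TSD_C1_lift TSD_delta1_lift[OF vs br]
    unfolding Lie_coboundary2_def TSD_coboundary2_def by metis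
  show ?thesis
    using cocycle coboundary by (auto intro!: ext simp: Lambda2_def scaleX_def)
qed

end
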